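(* Let $k$ be a perfect field of characteristic $p>0$, $P$ a finite poset, $R=\mathcal{R}_k[J(P)]$ the Hibi ring and $\mathfrak{m}=R_+$. Then \[ \operatorname{fpt}(\mathfrak{m})\le\min\{\operatorname{len}C\mid C\text{ a maximal chain in }\overline{P}\}=\min\{\operatorname{len}C\mid C\text{ a maximal chain in }P\}+2 . \]
   Context: $J(P)$ is the set of poset ideals of $P=\{p_1,\dots,p_N\}$ (down-closed subsets, including $\emptyset$ and $P$). The Hibi ring is $\mathcal{R}_k[J(P)]=k[\,T\prod_{p_i\in I}X_i\mid I\in J(P)\,]\subseteq k[T,X_1,\dots,X_N]$, each generator in degree $1$; $\mathfrak{m}=R_+$ is generated by these generators. $\overline{P}=P\cup\{-\infty,\infty\}$ with $-\infty<x<\infty$ for all $x\in P$. The length of a chain $C$ is $\#C-1$. For a real $t\ge0$, the pair $(R,\mathfrak{m}^t)$ is $F$-pure if for all large $q=p^e$ there is $d\in\mathfrak{m}^{\lceil t(q-1)\rceil}$ such that the $R$-linear map $R\to R^{1/q}$, $1\mapsto d^{1/q}$, splits; $\operatorname{fpt}(\mathfrak{m})=\sup\{t\ge0\mid(R,\mathfrak{m}^t)\text{ is }F\text{-pure}\}$. *)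

theory Defs
  imports "HOL-Analysis.Analysis" "HOL-Library.Poly_Mapping"
begin

inductive_set gen_alg :: "'r::comm_ring_1 set \<Rightarrow> 'r set \<Rightarrow> 'r set" for B G where
  base: "b \<in> B \<Longrightarrow> b \<in> gen_alg B G"
| gen: "g \<in> G \<Longrightarrow> g \<in> gen_alg B G"
| zero: "0 \<in> gen_alg B G"
| one: "1 \<in> gen_alg B G"
| uminus: "x \<in> gen_alg B G \<Longrightarrow> - x \<in> gen_alg B G"
| add: "x \<in> gen_alg B G \<Longrightarrow> y \<in> gen_alg B G \<Longrightarrow> x + y \<in> gen_alg B G"
| mult: "x \<in> gen_alg B G \<Longrightarrow> y \<in> gen_alg B G \<Longrightarrow> x * y \<in> gen_alg B G"

inductive_set ideal_gen :: "'r::comm_ring_1 set \<Rightarrow> 'r set \<Rightarrow> 'r set" for S G where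
  zero: "0 \<in> ideal_gen S G"
| lin: "r \<in> S \<Longrightarrow> g \<in> G \<Longrightarrow> r * g \<in> ideal_gen S G"
| add: "x \<in> ideal_gen S G \<Longrightarrow> y \<in> ideal_gen S G \<Longrightarrow> x + y \<in> ideal_gen S G"

fun prods :: "'r::comm_ring_1 set \<Rightarrow> nat \<Rightarrow> 'r set" where
  "prods I 0 = {1}"
| "prods I (Suc n) = {a * b | a b. a \<in> I \<and> b \<in> prods I n}"

definition ideal_pow :: "'r::comm_ring_1 set \<Rightarrow> 'r set \<Rightarrow> nat \<Rightarrow> 'r set" where
  "ideal_pow S I n = ideal_gen S (prods I n)"

text \<open>The S-linear map S \<rightarrow> S^{1/q}, 1 \<mapsto> d^{1/q} splits.  S^{1/q} is identified with
  the Frobenius pushforward F^e_* S (S as an S-module via r\<cdot>s = r^q s, s \<leftrightarrow> s^{1/q});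
  a splitting is an S-linear \<phi> : F^e_* S \<rightarrow> S with \<phi>(d) = 1.\<close>
definition frob_splits :: "'r::comm_ring_1 set \<Rightarrow> nat \<Rightarrow> 'r \<Rightarrow> bool" where
  "frob_splits S q d \<longleftrightarrow> d \<in> S \<and> (\<exists>\<phi>. (\<forall>x\<in>S. \<phi> x \<in> S)
      \<and> (\<forall>x\<in>S. \<forall>y\<in>S. \<phi> (x + y) = \<phi> x + \<phi> y)
      \<and> (\<forall>r\<in>S. \<forall>s\<in>S. \<phi> (r ^ q * s) = r * \<phi> s)
      \<and> \<phi> d = 1)"

definition F_pure :: "'r::comm_ring_1 set \<Rightarrow> 'r set \<Rightarrow> nat \<Rightarrow> real \<Rightarrow> bool" where
  "F_pure S I p t \<longleftrightarrow> (\<exists>e0. \<forall>e\<ge>e0. \<exists>d \<in> ideal_pow S I (nat \<lceil>t * (real (p ^ e) - 1)\<rceil>).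
      frob_splits S (p ^ e) d)"

definition fpt :: "'r::comm_ring_1 set \<Rightarrow> 'r set \<Rightarrow> nat \<Rightarrow> ereal" where
  "fpt S I p = Sup {ereal t | t. t \<ge> 0 \<and> F_pure S I p t}"

definition is_poset :: "'a set \<Rightarrow> ('a \<Rightarrow> 'a \<Rightarrow> bool) \<Rightarrow> bool" where
  "is_poset P le \<longleftrightarrow> (\<forall>x\<in>P. le x x) \<and> (\<forall>x\<in>P. \<forall>y\<in>P. le x y \<and> le y x \<longrightarrow> x = y)
     \<and> (\<forall>x\<in>P. \<forall>y\<in>P. \<forall>z\<in>P. le x y \<and> le y z \<longrightarrow> le x z)"

definition poset_ideals :: "'a set \<Rightarrow> ('a \<Rightarrow> 'a \<Rightarrow> bool) \<Rightarrow> 'a set set" where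
  "poset_ideals P le = {I. I \<subseteq> P \<and> (\<forall>x\<in>I. \<forall>y\<in>P. le y x \<longrightarrow> y \<in> I)}"

definition is_chain :: "'a set \<Rightarrow> ('a \<Rightarrow> 'a \<Rightarrow> bool) \<Rightarrow> 'a set \<Rightarrow> bool" where
  "is_chain P le C \<longleftrightarrow> C \<subseteq> P \<and> (\<forall>x\<in>C. \<forall>y\<in>C. le x y \<or> le y x)"

definition is_max_chain :: "'a set \<Rightarrow> ('a \<Rightarrow> 'a \<Rightarrow> bool) \<Rightarrow> 'a set \<Rightarrow> bool" where
  "is_max_chain P le C \<longleftrightarrow> is_chain P le C \<and> (\<forall>D. is_chain P le D \<and> C \<subseteq> D \<longrightarrow> D = C)"

definition chain_len :: "'a set \<Rightarrow> int" where
  "chain_len C = int (card C) - 1"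

datatype 'a ext = MInf | Elt 'a | PInf

fun le_bar :: "('a \<Rightarrow> 'a \<Rightarrow> bool) \<Rightarrow> 'a ext \<Rightarrow> 'a ext \<Rightarrow> bool" where
  "le_bar le MInf _ = True"
| "le_bar le (Elt x) MInf = False"
| "le_bar le (Elt x) (Elt y) = le x y"
| "le_bar le (Elt x) PInf = True"
| "le_bar le PInf y = (y = PInf)"

definition P_bar :: "'a set \<Rightarrow> 'a ext set" where
  "P_bar P = {MInf, PInf} \<union> Elt ` P"

text \<open>Ambient polynomial ring k[T, X_p : p \<in> P]: variable None is T, variable Some p is X_p.\<close>
type_synonym ('a, 'k) mpoly = "('a option \<Rightarrow>\<^sub>0 nat) \<Rightarrow>\<^sub>0 'k"

definition hibi_gen :: "'a set \<Rightarrow> ('a, 'k::comm_ring_1) mpoly" where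
  "hibi_gen I = Poly_Mapping.single
     (Poly_Mapping.single None 1 + (\<Sum>x\<in>I. Poly_Mapping.single (Some x) 1)) 1"

definition hibi_gens :: "'a set \<Rightarrow> ('a \<Rightarrow> 'a \<Rightarrow> bool) \<Rightarrow> ('a, 'k::comm_ring_1) mpoly set" where
  "hibi_gens P le = hibi_gen ` poset_ideals P le"

definition hibi_ring :: "'a set \<Rightarrow> ('a \<Rightarrow> 'a \<Rightarrow> bool) \<Rightarrow> ('a, 'k::comm_ring_1) mpoly set" where
  "hibi_ring P le = gen_alg (range (\<lambda>c. Poly_Mapping.single 0 c)) (hibi_gens P le)"

definition hibi_max :: "'a set \<Rightarrow> ('a \<Rightarrow> 'a \<Rightarrow> bool) \<Rightarrow> ('a, 'k::comm_ring_1) mpoly set" where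
  "hibi_max P le = ideal_gen (hibi_ring P le) (hibi_gens P le)"

end

theory Submission
  imports Defs
begin

text \<open>If \<open>(R, \<mm>\<^sup>t)\<close> is F-pure, then for large \<open>q = p\<^sup>e\<close> some \<open>d \<in> \<mm>\<^sup>N\<close>, \<open>N = \<lceil>t(q-1)\<rceil>\<close>,
  has an \<open>R\<close>-linear \<open>\<phi>: F\<^sup>e\<^sub>*R \<rightarrow> R\<close> with \<open>\<phi>(d) = 1\<close>, so some monomial \<open>x\<^sup>\<alpha>\<close> of \<open>d\<close> has
  \<open>\<phi>(x\<^sup>\<alpha>)\<close> with nonzero constant term.  Monomials of \<open>R\<close> are the order-reversing functions
  \<open>\<alpha>\<close> on \<open>P_bar P\<close> vanishing at \<open>\<infinity>\<close>, and \<open>\<alpha>(-\<infinity>) \<ge> N\<close> is the degree.  If \<open>\<alpha>\<close> dropped by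
  \<open>q\<close> or more across a cover \<open>u < v\<close>, there would be monomials with \<open>q s + \<alpha> = q s' + w\<close>,
  \<open>s(u) = s(v)\<close> and \<open>s'(u) = s'(v) + 1\<close>; linearity gives \<open>x\<^sup>s \<phi>(x\<^sup>\<alpha>) = x\<^sup>s\<^sup>' \<phi>(x\<^sup>w)\<close>, so
  \<open>x\<^sup>s\<close> would be \<open>x\<^sup>s\<^sup>'\<close> times a monomial of \<open>R\<close>, which \<open>s - s'\<close> (increasing from \<open>u\<close> to \<open>v\<close>)
  forbids.  Hence \<open>\<alpha>\<close> drops by at most \<open>q - 1\<close> along each step of a maximal chain \<open>C\<close> of
  \<open>P_bar P\<close>, giving \<open>t(q-1) \<le> N \<le> len C \<sqdot> (q-1)\<close>.  Maximal chains of \<open>P_bar P\<close> are those of \<open>P\<close>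
  with \<open>-\<infinity>\<close> and \<open>\<infinity>\<close> adjoined, which gives the \<open>+ 2\<close>.\<close>

abbreviation lookup where "lookup \<equiv> Poly_Mapping.lookup"
abbreviation keys where "keys \<equiv> Poly_Mapping.keys"
abbreviation single where "single \<equiv> Poly_Mapping.single"

lemma
  assumes "is_poset Q L"
  shows poset_refl: "x \<in> Q \<Longrightarrow> L x x"
    and poset_antisym: "x \<in> Q \<Longrightarrow> y \<in> Q \<Longrightarrow> L x y \<Longrightarrow> L y x \<Longrightarrow> x = y"
    and poset_trans: "x \<in> Q \<Longrightarrow> y \<in> Q \<Longrightarrow> z \<in> Q \<Longrightarrow> L x y \<Longrightarrow> L y z \<Longrightarrow> L x z"
  using assms unfolding is_poset_def by blast+

definition covers :: "'a set \<Rightarrow> ('a \<Rightarrow> 'a \<Rightarrow> bool) \<Rightarrow> 'a \<Rightarrow> 'a \<Rightarrow> bool" where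
  "covers Q L x y \<longleftrightarrow> x \<in> Q \<and> y \<in> Q \<and> L x y \<and> x \<noteq> y
     \<and> (\<forall>z\<in>Q. L x z \<and> L z y \<longrightarrow> z = x \<or> z = y)"

lemma covers_of_max_chain:
  assumes po: "is_poset Q L" and C: "is_max_chain Q L C" and xy: "covers C L x y"
  shows "covers Q L x y"
proof -
  note trans = poset_trans[OF po]
  have CQ: "C \<subseteq> Q" and tot: "\<forall>a\<in>C. \<forall>b\<in>C. L a b \<or> L b a"
    using C unfolding is_max_chain_def is_chain_def by auto
  have x: "x \<in> C" and y: "y \<in> C" and between: "\<forall>w\<in>C. L x w \<and> L w y \<longrightarrow> w = x \<or> w = y"
    using xy unfolding covers_def by auto
  have "z = x \<or> z = y" if z: "z \<in> Q" "L x z" "L z y" for z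
  proof -
    have "L c z \<or> L z c" if c: "c \<in> C" for c
    proof (cases "L c x \<or> L y c")
      case True
      then show ?thesis using trans[of c x z] trans[of z y c] c x y z CQ by blast
    next
      case False
      then have "c = x \<or> c = y" using between tot c x y by blast
      then show ?thesis using z by blast
    qed
    moreover have "L z z" using poset_refl[OF po z(1)] .
    ultimately have "is_chain Q L (insert z C)"
      using CQ tot z(1) unfolding is_chain_def by blast
    then have "z \<in> C" using C unfolding is_max_chain_def by blast
    then show ?thesis using between z by blast
  qed
  then show ?thesis using xy CQ unfolding covers_def by blast
qed

lemma finite_chain_has_greatest:
  assumes po: "is_poset Q L" and C: "is_chain Q L C" and "finite C" "C \<noteq> {}"
  obtains t where "t \<in> C" "\<forall>x\<in>C. L x t"
proof -
  have "\<exists>t\<in>C. \<forall>x\<in>C. L x t" using \<open>finite C\<close> \<open>C \<noteq> {}\<close> C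
  proof (induction C rule: finite_ne_induct)
    case (singleton x)
    then show ?case using poset_refl[OF po] unfolding is_chain_def by auto
  next
    case (insert x C)
    then obtain t where t: "t \<in> C" "\<forall>y\<in>C. L y t" unfolding is_chain_def by auto
    have Q: "x \<in> Q" "t \<in> Q" using insert.prems t(1) unfolding is_chain_def by auto
    show ?case
    proof (cases "L x t")
      case True
      then show ?thesis using t by blast
    next
      case False
      then have "L t x" using insert.prems t(1) unfolding is_chain_def by blast
      then have "\<forall>y\<in>insert x C. L y x"
        using poset_trans[OF po] poset_refl[OF po] insert.prems Q t(2) unfolding is_chain_def by blast
      then show ?thesis by blast
    qed
  qed
  then show thesis using that by blast
qed

lemma covers_remove_greatest:
  assumes po: "is_poset Q L" and CQ: "C \<subseteq> Q" and t: "t \<in> C" "\<forall>x\<in>C. L x t"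
    and xy: "covers (C - {t}) L x y"
  shows "covers C L x y"
proof -
  have y: "y \<in> C" "y \<noteq> t" using xy unfolding covers_def by auto
  have "w = x \<or> w = y" if "w \<in> C" "L x w" "L w y" for w
  proof (cases "w = t")
    case True
    then have "y = t" using poset_antisym[OF po] t y CQ that(3) by blast
    then show ?thesis using y by simp
  next
    case False
    then show ?thesis using xy that unfolding covers_def by blast
  qed
  then show ?thesis using xy unfolding covers_def by blast
qed

lemma chain_cover_steps_bound:
  fixes B :: "'a \<Rightarrow> nat"
  assumes "is_poset Q L" "is_chain Q L C" "finite C" "b \<in> C" "t \<in> C"
    "\<forall>x\<in>C. L b x" "\<forall>x\<in>C. L x t"
    "\<And>x y. covers C L x y \<Longrightarrow> B x \<le> B y + K"
  shows "B b \<le> B t + (card C - 1) * K"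
  using assms(2-)
proof (induction "card C" arbitrary: C t rule: less_induct)
  case less
  note po = \<open>is_poset Q L\<close>
  show ?case
  proof (cases "t = b")
    case True
    then show ?thesis by simp
  next
    case False
    define C' where "C' = C - {t}"
    have CQ: "C \<subseteq> Q" using less.prems(1) unfolding is_chain_def by simp
    have C'chain: "is_chain Q L C'" using less.prems(1) unfolding C'_def is_chain_def by auto
    have "b \<in> C'" using less.prems(3) False unfolding C'_def by simp
    then obtain t' where t': "t' \<in> C'" "\<forall>x\<in>C'. L x t'"
      using finite_chain_has_greatest[OF po C'chain] less.prems(2) unfolding C'_def by blast
    have "card C > 0" using less.prems(2,4) card_gt_0_iff by blast
    then have card_C': "card C' = card C - 1" "card C' < card C"
      using less.prems(2,4) unfolding C'_def by auto
    have IH: "B b \<le> B t' + (card C' - 1) * K"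
    proof (rule less.hyps[OF card_C'(2) C'chain])
      show "finite C'" "b \<in> C'" "t' \<in> C'" "\<forall>x\<in>C'. L x t'"
        using less.prems(2) \<open>b \<in> C'\<close> t' unfolding C'_def by auto
      show "\<forall>x\<in>C'. L b x" using less.prems(5) unfolding C'_def by simp
      show "B x \<le> B y + K" if "covers C' L x y" for x y
        using less.prems(7) covers_remove_greatest[OF po CQ less.prems(4,6)] that
        unfolding C'_def by blast
    qed
    have "w = t' \<or> w = t" if "w \<in> C" "L t' w" "L w t" for w
    proof (cases "w = t")
      case False
      then have "L w t'" using t' that(1) unfolding C'_def by blast
      then show ?thesis using poset_antisym[OF po] t' that CQ unfolding C'_def by blast
    qed simp
    then have "covers C L t' t"
      using t' less.prems(4,6) unfolding covers_def C'_def by auto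
    then have "B t' \<le> B t + K" by (rule less.prems(7))
    moreover have "card C \<ge> 2"
      using card_mono[OF less.prems(2), of "{b, t}"] less.prems(3,4) False by simp
    then obtain n where "card C = Suc (Suc n)" by (metis add_2_eq_Suc le_Suc_ex)
    ultimately show ?thesis using IH card_C'(1) by simp
  qed
qed

lemma cover_glued_rank:
  assumes po: "is_poset Q L" and fin: "finite Q" and uv: "covers Q L u v"
  obtains F :: "'a \<Rightarrow> nat" where "F u = F v"
    "\<And>z z'. z \<in> Q \<Longrightarrow> z' \<in> Q \<Longrightarrow> L z z' \<Longrightarrow> F z' \<le> F z"
    "\<And>z z'. z \<in> Q \<Longrightarrow> z' \<in> Q \<Longrightarrow> L z z' \<Longrightarrow> z \<noteq> z' \<Longrightarrow> (z, z') \<noteq> (u, v) \<Longrightarrow> F z' < F z"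
    "\<And>t. t \<in> Q \<Longrightarrow> \<forall>z\<in>Q. L z t \<Longrightarrow> F t = 0"
proof -
  have u: "u \<in> Q" "v \<in> Q" "L u v" "u \<noteq> v"
    and between: "\<And>z. z \<in> Q \<Longrightarrow> L u z \<Longrightarrow> L z v \<Longrightarrow> z = u \<or> z = v"
    using uv unfolding covers_def by auto
  note refl = poset_refl[OF po] and antisym = poset_antisym[OF po] and trans = poset_trans[OF po]
  \<comment> \<open>\<open>G\<close> is the preorder obtained from \<open>L\<close> by gluing \<open>u\<close> and \<open>v\<close>;
    \<open>F z\<close> counts the \<open>G\<close>-classes strictly above \<open>z\<close>, the class of \<open>u\<close> and \<open>v\<close> counted once.\<close>
  define G where "G z z' \<longleftrightarrow> L z z' \<or> (L z v \<and> L u z')" for z z'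
  have G_trans: "G x z" if "x \<in> Q" "y \<in> Q" "z \<in> Q" "G x y" "G y z" for x y z
    using that trans[of x y z] trans[of x y v] trans[of u y z] u unfolding G_def by blast
  have G_uv: "G u v" "G v u" using u refl unfolding G_def by auto
  define S where "S z = {w \<in> Q - {v}. G z w \<and> \<not> G w z}" for z
  define F where "F z = card (S z)" for z
  have S_mono: "S z' \<subseteq> S z" if "z \<in> Q" "z' \<in> Q" "L z z'" for z z'
    using that G_trans[of z z'] G_trans[of _ z z'] unfolding S_def G_def by blast
  have F_mono: "F z' \<le> F z" if "z \<in> Q" "z' \<in> Q" "L z z'" for z z'
    using card_mono[OF _ S_mono[OF that]] fin unfolding F_def S_def by simp
  have F_strict: "F z' < F z"
    if z: "z \<in> Q" "z' \<in> Q" "L z z'" "z \<noteq> z'" "(z, z') \<noteq> (u, v)" for z z'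
  proof -
    have "\<not> L z' z" using antisym z by blast
    moreover have "\<not> (L z' v \<and> L u z)"
    proof
      assume "L z' v \<and> L u z"
      then have "z = u \<or> z = v" "z' = u \<or> z' = v"
        using between trans[of z z' v] trans[of u z z'] z u by blast+
      then show False using z u antisym by blast
    qed
    ultimately have not_G: "\<not> G z' z" unfolding G_def by blast
    define e where "e = (if z' = v then u else z')"
    have "e \<in> S z"
      using not_G G_trans[of z' u z] G_trans[of z u v] G_uv u z refl[of z'] refl[of u]
      unfolding S_def e_def G_def by auto
    moreover have "e \<notin> S z'" using G_uv refl[of z'] z(2) unfolding S_def e_def G_def by auto
    ultimately have "S z' \<subset> S z" using S_mono[OF z(1-3)] by blast
    then show ?thesis using fin unfolding F_def S_def by (simp add: psubset_card_mono)
  qed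
  have "S u = S v"
    using G_trans[of u v] G_trans[of v u] G_trans[of _ u v] G_trans[of _ v u] G_uv u
    unfolding S_def by blast
  then have "F u = F v" unfolding F_def by simp
  moreover have "F t = 0" if "t \<in> Q" "\<forall>z\<in>Q. L z t" for t
  proof -
    have "S t = {}" using that unfolding S_def G_def by blast
    then show ?thesis unfolding F_def by simp
  qed
  ultimately show thesis using that F_mono F_strict by blast
qed

lemma finite_max_chain_exists:
  assumes "finite P"
  obtains D where "is_max_chain P le D"
proof -
  let ?CH = "{D. is_chain P le D}"
  have "?CH \<subseteq> Pow P" unfolding is_chain_def by auto
  then have "finite (card ` ?CH)" using assms by (simp add: finite_subset)
  moreover have "{} \<in> ?CH" unfolding is_chain_def by simp
  ultimately have "Max (card ` ?CH) \<in> card ` ?CH" by (intro Max_in) auto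
  then obtain D where D: "is_chain P le D" "card D = Max (card ` ?CH)" by auto
  have "E = D" if E: "is_chain P le E" "D \<subseteq> E" for E
  proof (rule card_seteq[symmetric])
    show "finite E" using E(1) assms unfolding is_chain_def by (blast intro: finite_subset)
    show "card E \<le> card D" unfolding D(2) using E(1) \<open>finite (card ` ?CH)\<close> by (simp add: Max_ge)
  qed (fact E(2))
  then show thesis using that D(1) unfolding is_max_chain_def by blast
qed

lemma finite_max_chains:
  assumes "finite P"
  shows "finite {C. is_max_chain P le C}"
proof (rule finite_subset)
  show "{C. is_max_chain P le C} \<subseteq> Pow P" unfolding is_max_chain_def is_chain_def by auto
qed (simp add: assms)

lemma is_poset_P_bar:
  assumes "is_poset P le"
  shows "is_poset (P_bar P) (le_bar le)"
proof -
  have "le_bar le x x" if "x \<in> P_bar P" for x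
    using that poset_refl[OF assms] unfolding P_bar_def by (cases x) auto
  moreover have "x = y" if "x \<in> P_bar P" "y \<in> P_bar P" "le_bar le x y" "le_bar le y x" for x y
    using that poset_antisym[OF assms] unfolding P_bar_def by (cases x; cases y) auto
  moreover have "le_bar le x z"
    if "x \<in> P_bar P" "y \<in> P_bar P" "z \<in> P_bar P" "le_bar le x y" "le_bar le y z" for x y z
    using that unfolding P_bar_def
    by (cases x; cases y; cases z) (auto intro: poset_trans[OF assms])
  ultimately show ?thesis unfolding is_poset_def by blast
qed

lemma Elt_in_P_bar_iff [simp]: "Elt z \<in> P_bar P \<longleftrightarrow> z \<in> P"
  unfolding P_bar_def by auto

lemma is_chain_Elt_preimage:
  "is_chain (P_bar P) (le_bar le) E \<Longrightarrow> is_chain P le {z. Elt z \<in> E}"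
  unfolding is_chain_def by force

lemma finite_P_bar: "finite P \<Longrightarrow> finite (P_bar P)"
  unfolding P_bar_def by simp

lemma le_bar_PInf: "le_bar le x PInf"
  by (cases x) auto

definition bar_chain :: "'a set \<Rightarrow> 'a ext set" where
  "bar_chain D = insert MInf (insert PInf (Elt ` D))"

lemma card_bar_chain: "finite D \<Longrightarrow> card (bar_chain D) = card D + 2"
  unfolding bar_chain_def by (simp add: card_image inj_on_def image_iff)

lemma subset_bar_chain_Elt_preimage: "E \<subseteq> bar_chain {z. Elt z \<in> E}"
proof
  fix x assume "x \<in> E" then show "x \<in> bar_chain {z. Elt z \<in> E}"
    unfolding bar_chain_def by (cases x) auto
qed

lemma is_chain_bar_chain:
  assumes "is_chain P le D"
  shows "is_chain (P_bar P) (le_bar le) (bar_chain D)"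
  unfolding is_chain_def
proof (intro conjI ballI)
  show "bar_chain D \<subseteq> P_bar P" using assms unfolding is_chain_def bar_chain_def P_bar_def by auto
  fix x y assume "x \<in> bar_chain D" "y \<in> bar_chain D"
  then show "le_bar le x y \<or> le_bar le y x"
    using assms unfolding is_chain_def bar_chain_def by (cases x; cases y) auto
qed

lemma max_chain_P_bar_ends:
  assumes "is_max_chain (P_bar P) (le_bar le) C"
  shows "MInf \<in> C" "PInf \<in> C"
proof -
  have "is_chain (P_bar P) (le_bar le) (insert MInf C)" "is_chain (P_bar P) (le_bar le) (insert PInf C)"
    using assms unfolding is_max_chain_def is_chain_def P_bar_def by (auto simp: le_bar_PInf)
  then show "MInf \<in> C" "PInf \<in> C" using assms unfolding is_max_chain_def by blast+
qed

lemma max_chain_P_bar_iff: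
  "is_max_chain (P_bar P) (le_bar le) C \<longleftrightarrow> (\<exists>D. is_max_chain P le D \<and> C = bar_chain D)"
proof
  assume C: "is_max_chain (P_bar P) (le_bar le) C"
  define D where "D = {z. Elt z \<in> C}"
  have C_eq: "C = bar_chain D"
  proof
    show "C \<subseteq> bar_chain D" unfolding D_def by (rule subset_bar_chain_Elt_preimage)
    show "bar_chain D \<subseteq> C" using max_chain_P_bar_ends[OF C] unfolding bar_chain_def D_def by auto
  qed
  have "is_chain P le D"
    using C is_chain_Elt_preimage unfolding is_max_chain_def D_def by blast
  moreover have "E = D" if "is_chain P le E" "D \<subseteq> E" for E
  proof -
    have "bar_chain E = C"
    proof -
      have "bar_chain D \<subseteq> bar_chain E" using that(2) unfolding bar_chain_def by auto
      then show ?thesis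
        using C is_chain_bar_chain[OF that(1)] unfolding C_eq is_max_chain_def by blast
    qed
    then show ?thesis using that(2) unfolding C_eq bar_chain_def by auto
  qed
  ultimately show "\<exists>D. is_max_chain P le D \<and> C = bar_chain D"
    using C_eq unfolding is_max_chain_def by blast
next
  assume "\<exists>D. is_max_chain P le D \<and> C = bar_chain D"
  then obtain D where D: "is_max_chain P le D" and C: "C = bar_chain D" by blast
  have "E = bar_chain D" if E: "is_chain (P_bar P) (le_bar le) E" "bar_chain D \<subseteq> E" for E
  proof -
    have "is_chain P le {z. Elt z \<in> E}" using E(1) by (rule is_chain_Elt_preimage)
    moreover have "D \<subseteq> {z. Elt z \<in> E}" using E(2) unfolding bar_chain_def by auto
    ultimately have D_eq: "{z. Elt z \<in> E} = D" using D unfolding is_max_chain_def by blast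
    have "E \<subseteq> bar_chain D" using subset_bar_chain_Elt_preimage[of E] unfolding D_eq .
    then show ?thesis using E(2) by (rule subset_antisym)
  qed
  moreover have "is_chain P le D" using D unfolding is_max_chain_def by simp
  ultimately show "is_max_chain (P_bar P) (le_bar le) C"
    using is_chain_bar_chain unfolding is_max_chain_def C by blast
qed

lemma finite_max_chain_P_bar:
  assumes "finite P" "is_max_chain (P_bar P) (le_bar le) C"
  shows "finite C"
proof (rule finite_subset)
  show "C \<subseteq> P_bar P" using assms(2) unfolding is_max_chain_def is_chain_def by simp
  show "finite (P_bar P)" using assms(1) by (rule finite_P_bar)
qed

lemma Min_chain_len_P_bar:
  assumes "finite P"
  shows "Min (chain_len ` {C. is_max_chain (P_bar P) (le_bar le) C})
       = Min (chain_len ` {C. is_max_chain P le C}) + 2"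
proof -
  let ?M = "{D. is_max_chain P le D}"
  have fin_M: "finite ?M" using assms by (rule finite_max_chains)
  have ne_M: "?M \<noteq> {}" using finite_max_chain_exists[OF assms] by blast
  have "chain_len (bar_chain D) = chain_len D + 2" if "D \<in> ?M" for D
    using that assms finite_subset unfolding is_max_chain_def is_chain_def chain_len_def
    by (fastforce simp: card_bar_chain)
  moreover have "{C. is_max_chain (P_bar P) (le_bar le) C} = bar_chain ` ?M"
    unfolding max_chain_P_bar_iff by auto
  ultimately have "chain_len ` {C. is_max_chain (P_bar P) (le_bar le) C} = (\<lambda>D. chain_len D + 2) ` ?M"
    by (simp add: image_image)
  then show ?thesis using Min_add_commute[OF fin_M ne_M, of chain_len 2] by simp
qed

lemma lookup_single_one_times:
  fixes k j :: "'a::cancel_comm_monoid_add" and X :: "'a \<Rightarrow>\<^sub>0 'b::comm_semiring_1"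
  shows "lookup (single k 1 * X) (k + j) = lookup X j"
proof -
  have "lookup (single k 1 * X) (k + j) = (\<Sum>l. (1 when k = l) * (\<Sum>q. lookup X q when k + j = l + q))"
    by (simp add: lookup_mult lookup_single)
  also have "\<dots> = (\<Sum>q. lookup X q when j = q)"
    by (simp add: when_mult)
  finally show ?thesis by simp
qed

lemma single_one_power: "single s (1::'k::comm_semiring_1) ^ n = single (\<Sum>i<n. s) 1"
  by (induction n) (simp_all add: mult_single add.commute)

lemma keys_mult_subset:
  "keys x \<subseteq> A \<Longrightarrow> keys y \<subseteq> B \<Longrightarrow> keys (x * y) \<subseteq> {a + b |a b. a \<in> A \<and> b \<in> B}"
  using keys_mult[of x y] by fastforce

lemma poly_mapping_monomial_sum: "d = (\<Sum>\<alpha>\<in>keys d. single \<alpha> (lookup d \<alpha>))"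
proof (rule poly_mapping_eqI)
  fix w
  have "lookup (\<Sum>\<alpha>\<in>keys d. single \<alpha> (lookup d \<alpha>)) w = (\<Sum>\<alpha>\<in>keys d. if \<alpha> = w then lookup d \<alpha> else 0)"
    by (simp add: lookup_sum lookup_single when_def eq_commute)
  also have "\<dots> = lookup d w" by (simp add: in_keys_iff)
  finally show "lookup d w = lookup (\<Sum>\<alpha>\<in>keys d. single \<alpha> (lookup d \<alpha>)) w" by simp
qed

text \<open>The monomials of the
  Hibi ring are exactly those whose exponent is order-reversing on \<open>P_bar P\<close> (\<open>hibi_exp\<close>).\<close>

definition exp_at :: "('a option \<Rightarrow>\<^sub>0 nat) \<Rightarrow> 'a ext \<Rightarrow> nat" where
  "exp_at \<alpha> u = (case u of MInf \<Rightarrow> lookup \<alpha> None | Elt z \<Rightarrow> lookup \<alpha> (Some z) | PInf \<Rightarrow> 0)"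

definition hibi_exp :: "'a set \<Rightarrow> ('a \<Rightarrow> 'a \<Rightarrow> bool) \<Rightarrow> ('a option \<Rightarrow>\<^sub>0 nat) \<Rightarrow> bool" where
  "hibi_exp P le \<alpha> \<longleftrightarrow> (\<forall>z. z \<notin> P \<longrightarrow> lookup \<alpha> (Some z) = 0)
     \<and> (\<forall>u\<in>P_bar P. \<forall>v\<in>P_bar P. le_bar le u v \<longrightarrow> exp_at \<alpha> v \<le> exp_at \<alpha> u)"

definition exp_of :: "'a set \<Rightarrow> ('a ext \<Rightarrow> nat) \<Rightarrow> ('a option \<Rightarrow>\<^sub>0 nat)" where
  "exp_of P G = Abs_poly_mapping (\<lambda>w. case w of None \<Rightarrow> G MInf | Some z \<Rightarrow> if z \<in> P then G (Elt z) else 0)"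

definition ideal_exp :: "'a set \<Rightarrow> ('a option \<Rightarrow>\<^sub>0 nat)" where
  "ideal_exp I = single None 1 + (\<Sum>x\<in>I. single (Some x) 1)"

lemma exp_at_simps [simp]:
  "exp_at \<alpha> MInf = lookup \<alpha> None" "exp_at \<alpha> (Elt z) = lookup \<alpha> (Some z)" "exp_at \<alpha> PInf = 0"
  by (simp_all add: exp_at_def)

lemma exp_at_add [simp]: "exp_at (\<alpha> + \<beta>) u = exp_at \<alpha> u + exp_at \<beta> u"
  by (cases u) (simp_all add: lookup_add)

lemma hibi_exp_add: "hibi_exp P le \<alpha> \<Longrightarrow> hibi_exp P le \<beta> \<Longrightarrow> hibi_exp P le (\<alpha> + \<beta>)"
  unfolding hibi_exp_def by (simp add: lookup_add add_mono)

lemma hibi_exp_zero: "hibi_exp P le 0"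
  unfolding hibi_exp_def by (auto simp: exp_at_def split: ext.splits)

lemma hibi_exp_antimono:
  "hibi_exp P le \<alpha> \<Longrightarrow> u \<in> P_bar P \<Longrightarrow> v \<in> P_bar P \<Longrightarrow> le_bar le u v \<Longrightarrow> exp_at \<alpha> v \<le> exp_at \<alpha> u"
  unfolding hibi_exp_def by blast

lemma lookup_exp_of:
  assumes "finite P"
  shows "lookup (exp_of P G) = (\<lambda>w. case w of None \<Rightarrow> G MInf | Some z \<Rightarrow> if z \<in> P then G (Elt z) else 0)"
    (is "_ = ?f")
proof -
  have "{w. ?f w \<noteq> 0} \<subseteq> insert None (Some ` P)"
  proof
    fix w assume "w \<in> {w. ?f w \<noteq> 0}"
    then show "w \<in> insert None (Some ` P)" by (cases w) (auto split: if_splits)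
  qed
  then have "finite {w. ?f w \<noteq> 0}" by (rule finite_subset) (simp add: assms)
  then show ?thesis unfolding exp_of_def by simp
qed

lemma lookup_exp_of_simps [simp]:
  assumes "finite P"
  shows "lookup (exp_of P G) None = G MInf" "z \<in> P \<Longrightarrow> lookup (exp_of P G) (Some z) = G (Elt z)"
    "z \<notin> P \<Longrightarrow> lookup (exp_of P G) (Some z) = 0"
  using lookup_exp_of[OF assms] by auto

lemma exp_at_exp_of:
  assumes "finite P" "u \<in> P_bar P" "G PInf = 0"
  shows "exp_at (exp_of P G) u = G u"
  using assms by (cases u) (auto simp: P_bar_def)

lemma hibi_exp_exp_of:
  assumes "finite P" "G PInf = 0"
    and "\<And>u v. u \<in> P_bar P \<Longrightarrow> v \<in> P_bar P \<Longrightarrow> le_bar le u v \<Longrightarrow> G v \<le> G u"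
  shows "hibi_exp P le (exp_of P G)"
  using assms unfolding hibi_exp_def by (simp add: exp_at_exp_of)

lemma exp_of_exp_at:
  assumes "finite P" "hibi_exp P le \<alpha>"
  shows "exp_of P (exp_at \<alpha>) = \<alpha>"
  by (rule poly_mapping_eqI) (use assms in \<open>auto simp: lookup_exp_of hibi_exp_def split: option.splits\<close>)

lemma exp_of_add:
  assumes "finite P"
  shows "exp_of P G + exp_of P H = exp_of P (\<lambda>u. G u + H u)"
  by (rule poly_mapping_eqI) (use assms in \<open>auto simp: lookup_exp_of lookup_add split: option.splits\<close>)

lemma sum_const_exp_of:
  assumes "finite P"
  shows "(\<Sum>i<n. exp_of P G) = exp_of P (\<lambda>u. n * G u)"
proof (induction n)
  case 0
  show ?case by (rule poly_mapping_eqI) (simp add: lookup_exp_of[OF assms] split: option.splits)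
next
  case (Suc n)
  then show ?case by (simp add: exp_of_add[OF assms] algebra_simps)
qed

lemma hibi_gen_eq: "hibi_gen I = single (ideal_exp I) 1"
  by (simp add: hibi_gen_def ideal_exp_def)

lemma lookup_ideal_exp:
  assumes "finite I"
  shows "lookup (ideal_exp I) None = 1" "lookup (ideal_exp I) (Some z) = (if z \<in> I then 1 else 0)"
  using assms by (simp_all add: ideal_exp_def lookup_add lookup_sum lookup_single when_def)

lemma hibi_exp_ideal_exp:
  assumes "finite P" "I \<in> poset_ideals P le"
  shows "hibi_exp P le (ideal_exp I)"
proof -
  have I: "I \<subseteq> P" "\<And>x y. x \<in> I \<Longrightarrow> y \<in> P \<Longrightarrow> le y x \<Longrightarrow> y \<in> I"
    using assms(2) unfolding poset_ideals_def by auto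
  then have "finite I" using assms(1) finite_subset by blast
  then show ?thesis
    unfolding hibi_exp_def using I
    by (auto simp: lookup_ideal_exp P_bar_def exp_at_def split: ext.splits)
qed

lemma keys_hibi_ring:
  assumes "finite P" "x \<in> (hibi_ring P le :: ('a, 'k::comm_ring_1) mpoly set)"
  shows "keys x \<subseteq> {\<alpha>. hibi_exp P le \<alpha>}"
  using assms(2) unfolding hibi_ring_def
proof (induction rule: gen_alg.induct)
  case (base b)
  then show ?case by (auto simp: hibi_exp_zero split: if_splits)
next
  case (gen g)
  then obtain I where "I \<in> poset_ideals P le" "g = single (ideal_exp I) 1"
    by (auto simp: hibi_gens_def hibi_gen_eq)
  then show ?case using hibi_exp_ideal_exp[OF assms(1)] by auto
next
  case (add x y)
  then show ?case using keys_add[of x y] by blast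
next
  case (mult x y)
  then show ?case using keys_mult_subset[OF mult.IH] hibi_exp_add by blast
qed (simp_all add: hibi_exp_zero)

lemma hibi_exp_degree_0:
  assumes "hibi_exp P le \<alpha>" "lookup \<alpha> None = 0"
  shows "\<alpha> = 0"
proof (rule poly_mapping_eqI)
  fix w
  have "exp_at \<alpha> (Elt z) \<le> exp_at \<alpha> MInf" if "z \<in> P" for z
    using hibi_exp_antimono[OF assms(1), of MInf "Elt z"] that unfolding P_bar_def by simp
  then show "lookup \<alpha> w = lookup 0 w"
    using assms unfolding hibi_exp_def by (cases w) fastforce+
qed

lemma hibi_exp_decompose:
  assumes fin: "finite P" and \<alpha>: "hibi_exp P le \<alpha>" "lookup \<alpha> None = Suc n"
  obtains I \<beta> where "I \<in> poset_ideals P le" "hibi_exp P le \<beta>" "lookup \<beta> None = n"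
    "\<alpha> = ideal_exp I + \<beta>"
proof
  define I where "I = {z \<in> P. Suc n \<le> lookup \<alpha> (Some z)}"
  define \<beta> where "\<beta> = exp_of P (\<lambda>u. min (exp_at \<alpha> u) n)"
  have bounded: "exp_at \<alpha> (Elt z) \<le> Suc n" if "z \<in> P" for z
    using hibi_exp_antimono[OF \<alpha>(1), of MInf "Elt z"] \<alpha>(2) that unfolding P_bar_def by simp
  have "y \<in> I" if "x \<in> I" "y \<in> P" "le y x" for x y
    using hibi_exp_antimono[OF \<alpha>(1), of "Elt y" "Elt x"] that unfolding P_bar_def I_def by auto
  then show "I \<in> poset_ideals P le" unfolding poset_ideals_def I_def by auto
  show "hibi_exp P le \<beta>" unfolding \<beta>_def
    by (rule hibi_exp_exp_of[OF fin]) (use hibi_exp_antimono[OF \<alpha>(1)] in \<open>auto intro: min.coboundedI1\<close>)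
  show "lookup \<beta> None = n" unfolding \<beta>_def using fin \<alpha>(2) by simp
  have "finite I" using fin unfolding I_def by simp
  show "\<alpha> = ideal_exp I + \<beta>"
  proof (rule poly_mapping_eqI)
    fix w show "lookup \<alpha> w = lookup (ideal_exp I + \<beta>) w"
    proof (cases w)
      case (Some z)
      with \<alpha> bounded[of z] show ?thesis
        unfolding hibi_exp_def \<beta>_def I_def using fin \<open>finite I\<close>
        by (cases "z \<in> P") (auto simp: lookup_add lookup_ideal_exp)
    qed (use \<alpha> fin \<open>finite I\<close> in \<open>simp add: lookup_add lookup_ideal_exp \<beta>_def\<close>)
  qed
qed

lemma monomial_in_hibi_ring:
  assumes "finite P" "hibi_exp P le \<alpha>"
  shows "single \<alpha> c \<in> (hibi_ring P le :: ('a, 'k::comm_ring_1) mpoly set)"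
proof -
  have "single \<alpha> (1::'k) \<in> hibi_ring P le" if "lookup \<alpha> None = n" "hibi_exp P le \<alpha>" for n \<alpha>
    using that
  proof (induction n arbitrary: \<alpha>)
    case 0
    then show ?case using hibi_exp_degree_0[OF 0(2,1)] unfolding hibi_ring_def by (simp add: gen_alg.one)
  next
    case (Suc n)
    then obtain I \<beta> where I: "I \<in> poset_ideals P le" and \<beta>: "hibi_exp P le \<beta>" "lookup \<beta> None = n"
      and \<alpha>: "\<alpha> = ideal_exp I + \<beta>"
      using hibi_exp_decompose[OF assms(1)] by metis
    have "single (ideal_exp I) (1::'k) \<in> hibi_ring P le"
      unfolding hibi_ring_def by (rule gen_alg.gen) (use I in \<open>auto simp: hibi_gens_def hibi_gen_eq\<close>)
    then show ?case
      using Suc.IH[OF \<beta>(2,1)] gen_alg.mult unfolding \<alpha> hibi_ring_def by (fastforce simp: mult_single)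
  qed
  moreover have "single 0 c \<in> (hibi_ring P le :: ('a, 'k) mpoly set)"
    unfolding hibi_ring_def by (rule gen_alg.base) simp
  ultimately show ?thesis
    using assms(2) gen_alg.mult unfolding hibi_ring_def by (fastforce simp: mult_single)
qed

lemma keys_hibi_max:
  assumes "finite P" "x \<in> (hibi_max P le :: ('a, 'k::comm_ring_1) mpoly set)"
  shows "keys x \<subseteq> {\<alpha>. hibi_exp P le \<alpha> \<and> 1 \<le> lookup \<alpha> None}"
  using assms(2) unfolding hibi_max_def
proof (induction rule: ideal_gen.induct)
  case (lin r g)
  then obtain I where I: "I \<in> poset_ideals P le" "g = single (ideal_exp I) 1"
    by (auto simp: hibi_gens_def hibi_gen_eq)
  then have "finite I" using assms(1) unfolding poset_ideals_def by (auto intro: finite_subset)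
  then have "keys g \<subseteq> {\<alpha>. hibi_exp P le \<alpha> \<and> 1 \<le> lookup \<alpha> None}"
    using I hibi_exp_ideal_exp[OF assms(1) I(1)] by (simp add: lookup_ideal_exp)
  then show ?case using keys_mult_subset[OF keys_hibi_ring[OF assms(1) lin(1)]] hibi_exp_add
    by (fastforce simp: lookup_add)
next
  case (add x y)
  then show ?case using keys_add[of x y] by blast
qed simp

lemma keys_ideal_pow_hibi_max:
  assumes "finite P" "x \<in> ideal_pow (hibi_ring P le) (hibi_max P le :: ('a, 'k::comm_ring_1) mpoly set) N"
  shows "keys x \<subseteq> {\<alpha>. hibi_exp P le \<alpha> \<and> N \<le> lookup \<alpha> None}"
proof -
  have prods: "keys y \<subseteq> {\<alpha>. hibi_exp P le \<alpha> \<and> n \<le> lookup \<alpha> None}"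
    if "y \<in> prods (hibi_max P le :: ('a, 'k) mpoly set) n" for y n
    using that
  proof (induction n arbitrary: y)
    case (Suc n)
    then obtain a b where "y = a * b" "a \<in> hibi_max P le" "b \<in> prods (hibi_max P le) n" by auto
    then show ?case
      using keys_mult_subset[OF keys_hibi_max[OF assms(1)] Suc.IH] hibi_exp_add
      by (fastforce simp: lookup_add)
  qed (simp add: hibi_exp_zero)
  show ?thesis
    using assms(2) unfolding ideal_pow_def
  proof (induction rule: ideal_gen.induct)
    case (lin r g)
    show ?case using keys_mult_subset[OF keys_hibi_ring[OF assms(1) lin(1)] prods[OF lin(2)]] hibi_exp_add
      by (fastforce simp: lookup_add)
  next
    case (add x y)
    then show ?case using keys_add[of x y] by blast
  qed simp
qed

lemma exchange_exponents:
  assumes fin: "finite P" and po: "is_poset P le" and \<alpha>: "hibi_exp P le \<alpha>"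
    and uv: "covers (P_bar P) (le_bar le) u v" and steep: "exp_at \<alpha> v + q \<le> exp_at \<alpha> u"
  obtains s s' w where "hibi_exp P le s" "hibi_exp P le s'" "hibi_exp P le w"
    "(\<Sum>i<q. s) + \<alpha> = (\<Sum>i<q. s') + w"
    "exp_at s u = exp_at s v" "exp_at s' u = Suc (exp_at s' v)"
proof -
  have u: "u \<in> P_bar P" "v \<in> P_bar P" "le_bar le u v" "u \<noteq> v"
    using uv unfolding covers_def by auto
  then have "u \<noteq> PInf" by (cases v) auto
  obtain F :: "'a ext \<Rightarrow> nat" where F_uv: "F u = F v"
    and F_mono: "\<And>z z'. z \<in> P_bar P \<Longrightarrow> z' \<in> P_bar P \<Longrightarrow> le_bar le z z' \<Longrightarrow> F z' \<le> F z"
    and F_strict: "\<And>z z'. z \<in> P_bar P \<Longrightarrow> z' \<in> P_bar P \<Longrightarrow> le_bar le z z' \<Longrightarrow> z \<noteq> z'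
      \<Longrightarrow> (z, z') \<noteq> (u, v) \<Longrightarrow> F z' < F z"
    and F_top: "\<And>t. t \<in> P_bar P \<Longrightarrow> \<forall>z\<in>P_bar P. le_bar le z t \<Longrightarrow> F t = 0"
    using cover_glued_rank[OF is_poset_P_bar[OF po] finite_P_bar[OF fin] uv] by blast
  have F_PInf: "F PInf = 0" using F_top[of PInf] le_bar_PInf unfolding P_bar_def by simp
  \<comment> \<open>\<open>F\<close> is constant on \<open>{u, v}\<close> and strictly decreasing across every other cover, which
    keeps \<open>s' = F + [u]\<close> and \<open>w = \<alpha> + q F - q [u]\<close> order-reversing.\<close>
  define \<delta> where "\<delta> z = (if z = u then 1 else 0 :: nat)" for z
  have \<delta>_le: "q * \<delta> z \<le> exp_at \<alpha> z" for z using steep unfolding \<delta>_def by auto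
  define s where "s = exp_of P (\<lambda>z. 2 * F z)"
  define s' where "s' = exp_of P (\<lambda>z. F z + \<delta> z)"
  define w where "w = exp_of P (\<lambda>z. exp_at \<alpha> z + q * F z - q * \<delta> z)"
  show thesis
  proof
    show "hibi_exp P le s" unfolding s_def
      by (rule hibi_exp_exp_of[OF fin]) (use F_PInf F_mono in auto)
    show "hibi_exp P le s'" unfolding s'_def
    proof (rule hibi_exp_exp_of[OF fin])
      show "F PInf + \<delta> PInf = 0" using F_PInf \<open>u \<noteq> PInf\<close> unfolding \<delta>_def by simp
      fix z z' assume z: "z \<in> P_bar P" "z' \<in> P_bar P" "le_bar le z z'"
      show "F z' + \<delta> z' \<le> F z + \<delta> z"
      proof (cases "z' = u \<and> z \<noteq> u")
        case True
        then show ?thesis using F_strict[OF z] unfolding \<delta>_def by auto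
      next
        case False
        then show ?thesis using F_mono[OF z] unfolding \<delta>_def by auto
      qed
    qed
    show "hibi_exp P le w" unfolding w_def
    proof (rule hibi_exp_exp_of[OF fin])
      show "exp_at \<alpha> PInf + q * F PInf - q * \<delta> PInf = 0" using F_PInf by simp
      fix z z' assume z: "z \<in> P_bar P" "z' \<in> P_bar P" "le_bar le z z'"
      have \<alpha>_z: "exp_at \<alpha> z' \<le> exp_at \<alpha> z" by (rule hibi_exp_antimono[OF \<alpha> z])
      consider "z = u" "z' = v" | "z = u" "z' = u" | "z = u" "z' \<noteq> u" "z' \<noteq> v" | "z \<noteq> u"
        by blast
      then show "exp_at \<alpha> z' + q * F z' - q * \<delta> z' \<le> exp_at \<alpha> z + q * F z - q * \<delta> z"
      proof cases
        case 3
        then have "q * F z' + q \<le> q * F z"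
          using F_strict[OF z] by (metis Suc_leI add.commute mult_Suc_right mult_le_mono2 prod.inject)
        then show ?thesis using \<alpha>_z 3 \<delta>_le[of u] unfolding \<delta>_def by simp
      next
        case 4
        have "exp_at \<alpha> z' + q * F z' \<le> exp_at \<alpha> z + q * F z"
          using \<alpha>_z F_mono[OF z] by (simp add: add_mono)
        then show ?thesis using 4 unfolding \<delta>_def by auto
      qed (use F_uv steep u in \<open>auto simp: \<delta>_def\<close>)
    qed
    have arith: "q * (2 * F z) + exp_at \<alpha> z = q * (F z + \<delta> z) + (exp_at \<alpha> z + q * F z - q * \<delta> z)"
      for z using \<delta>_le[of z] by (simp add: algebra_simps)
    have "(\<Sum>i<q. s) + \<alpha> = exp_of P (\<lambda>z. q * (2 * F z)) + exp_of P (exp_at \<alpha>)"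
      unfolding s_def sum_const_exp_of[OF fin] exp_of_exp_at[OF fin \<alpha>] ..
    also have "\<dots> = exp_of P (\<lambda>z. q * (F z + \<delta> z) + (exp_at \<alpha> z + q * F z - q * \<delta> z))"
      unfolding exp_of_add[OF fin] arith ..
    also have "\<dots> = (\<Sum>i<q. s') + w"
      unfolding s'_def w_def sum_const_exp_of[OF fin] exp_of_add[OF fin] ..
    finally show "(\<Sum>i<q. s) + \<alpha> = (\<Sum>i<q. s') + w" .
    show "exp_at s u = exp_at s v" "exp_at s' u = Suc (exp_at s' v)"
      unfolding s_def s'_def using u F_uv F_PInf \<open>u \<noteq> PInf\<close>
      by (simp_all add: exp_at_exp_of[OF fin] \<delta>_def)
  qed
qed

lemma splitting_kills_steep_monomial:
  fixes \<phi> :: "('a, 'k::comm_ring_1) mpoly \<Rightarrow> ('a, 'k) mpoly"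
  assumes fin: "finite P" and po: "is_poset P le"
    and \<phi>_R: "\<forall>x\<in>hibi_ring P le. \<phi> x \<in> hibi_ring P le"
    and \<phi>_lin: "\<forall>r\<in>hibi_ring P le. \<forall>s\<in>hibi_ring P le. \<phi> (r ^ q * s) = r * \<phi> s"
    and \<alpha>: "hibi_exp P le \<alpha>"
    and uv: "covers (P_bar P) (le_bar le) u v" and steep: "exp_at \<alpha> v + q \<le> exp_at \<alpha> u"
  shows "lookup (\<phi> (single \<alpha> c)) 0 = 0"
proof (rule ccontr)
  assume nonzero: "lookup (\<phi> (single \<alpha> c)) 0 \<noteq> 0"
  obtain s s' w where s: "hibi_exp P le s" "hibi_exp P le s'" "hibi_exp P le w"
    and exchange: "(\<Sum>i<q. s) + \<alpha> = (\<Sum>i<q. s') + w"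
    and at_uv: "exp_at s u = exp_at s v" "exp_at s' u = Suc (exp_at s' v)"
    using exchange_exponents[OF fin po \<alpha> uv steep] by blast
  note mono = monomial_in_hibi_ring[OF fin, where 'k = 'k]
  have "single s 1 * \<phi> (single \<alpha> c) = \<phi> (single s 1 ^ q * single \<alpha> c)"
    using \<phi>_lin mono[OF s(1)] mono[OF \<alpha>] by simp
  also have "\<dots> = \<phi> (single s' 1 ^ q * single w c)"
    by (simp add: single_one_power mult_single exchange)
  also have "\<dots> = single s' 1 * \<phi> (single w c)"
    using \<phi>_lin mono[OF s(2)] mono[OF s(3)] by simp
  finally have "lookup (single s' 1 * \<phi> (single w c)) (s + 0) \<noteq> 0"
    using nonzero lookup_single_one_times[of s "\<phi> (single \<alpha> c)" 0] by metis
  moreover have "keys (\<phi> (single w c)) \<subseteq> {\<beta>. hibi_exp P le \<beta>}"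
    using keys_hibi_ring[OF fin] \<phi>_R mono[OF s(3)] by blast
  ultimately obtain \<beta> where \<beta>: "s = s' + \<beta>" "hibi_exp P le \<beta>"
    using keys_mult[of "single s' (1::'k)" "\<phi> (single w c)"] by (force simp: in_keys_iff)
  have "exp_at \<beta> v \<le> exp_at \<beta> u" using hibi_exp_antimono[OF \<beta>(2)] uv unfolding covers_def by blast
  then show False using at_uv arg_cong[OF \<beta>(1), of "\<lambda>x. exp_at x u"] arg_cong[OF \<beta>(1), of "\<lambda>x. exp_at x v"]
    by simp
qed

lemma hibi_exp_degree_le_max_chain:
  assumes fin: "finite P" and po: "is_poset P le" and \<alpha>: "hibi_exp P le \<alpha>"
    and C: "is_max_chain (P_bar P) (le_bar le) C"
    and steps: "\<And>u v. covers (P_bar P) (le_bar le) u v \<Longrightarrow> exp_at \<alpha> u \<le> exp_at \<alpha> v + K"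
  shows "lookup \<alpha> None \<le> (card C - 1) * K"
proof -
  have chain: "is_chain (P_bar P) (le_bar le) C" using C unfolding is_max_chain_def by simp
  have "exp_at \<alpha> MInf \<le> exp_at \<alpha> PInf + (card C - 1) * K"
  proof (rule chain_cover_steps_bound[OF is_poset_P_bar[OF po] chain finite_max_chain_P_bar[OF fin C]
        max_chain_P_bar_ends[OF C]])
    show "\<forall>x\<in>C. le_bar le MInf x" "\<forall>x\<in>C. le_bar le x PInf" by (simp_all add: le_bar_PInf)
    show "exp_at \<alpha> x \<le> exp_at \<alpha> y + K" if "covers C (le_bar le) x y" for x y
      using steps covers_of_max_chain[OF is_poset_P_bar[OF po] C that] .
  qed
  then show ?thesis by simp
qed

lemma additive_on_sum:
  fixes \<phi> :: "'a::comm_monoid_add \<Rightarrow> 'b::cancel_comm_monoid_add"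
  assumes "0 \<in> R" "\<forall>x\<in>R. \<forall>y\<in>R. x + y \<in> R" "\<forall>x\<in>R. \<forall>y\<in>R. \<phi> (x + y) = \<phi> x + \<phi> y"
    and "finite A" "\<forall>a\<in>A. f a \<in> R"
  shows "\<phi> (sum f A) = (\<Sum>a\<in>A. \<phi> (f a))"
proof -
  have "\<phi> 0 = 0" using assms(1,3) add_cancel_right_right[of "\<phi> 0" "\<phi> 0"] by force
  have "sum f A \<in> R \<and> \<phi> (sum f A) = (\<Sum>a\<in>A. \<phi> (f a))"
    using assms(4,5) by (induction A rule: finite_induct) (use assms(1-3) \<open>\<phi> 0 = 0\<close> in auto)
  then show ?thesis ..
qed

lemma frob_splitting_degree_bound:
  assumes fin: "finite P" and po: "is_poset P le"
    and split: "frob_splits (hibi_ring P le :: ('a, 'k::comm_ring_1) mpoly set) q d"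
    and d: "d \<in> ideal_pow (hibi_ring P le) (hibi_max P le) N"
    and C: "is_max_chain (P_bar P) (le_bar le) C"
  shows "N \<le> (card C - 1) * (q - 1)"
proof -
  let ?R = "hibi_ring P le :: ('a, 'k) mpoly set"
  obtain \<phi> where \<phi>_R: "\<forall>x\<in>?R. \<phi> x \<in> ?R"
    and \<phi>_add: "\<forall>x\<in>?R. \<forall>y\<in>?R. \<phi> (x + y) = \<phi> x + \<phi> y"
    and \<phi>_lin: "\<forall>r\<in>?R. \<forall>s\<in>?R. \<phi> (r ^ q * s) = r * \<phi> s" and \<phi>_d: "\<phi> d = 1"
    using split unfolding frob_splits_def by blast
  have keys_d: "keys d \<subseteq> {\<alpha>. hibi_exp P le \<alpha> \<and> N \<le> lookup \<alpha> None}"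
    by (rule keys_ideal_pow_hibi_max[OF fin d])
  have expand: "\<phi> d = (\<Sum>\<alpha>\<in>keys d. \<phi> (single \<alpha> (lookup d \<alpha>)))"
  proof (subst poly_mapping_monomial_sum, rule additive_on_sum[OF _ _ \<phi>_add])
    show "0 \<in> ?R" "\<forall>x\<in>?R. \<forall>y\<in>?R. x + y \<in> ?R"
      unfolding hibi_ring_def by (auto intro: gen_alg.zero gen_alg.add)
    show "\<forall>\<alpha>\<in>keys d. single \<alpha> (lookup d \<alpha>) \<in> ?R"
      using keys_d monomial_in_hibi_ring[OF fin] by blast
  qed simp
  have "(\<Sum>\<alpha>\<in>keys d. lookup (\<phi> (single \<alpha> (lookup d \<alpha>))) 0) = lookup (\<phi> d) 0"
    unfolding expand by (simp add: lookup_sum)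
  then have "(\<Sum>\<alpha>\<in>keys d. lookup (\<phi> (single \<alpha> (lookup d \<alpha>))) 0) \<noteq> 0"
    using \<phi>_d by simp
  then obtain \<alpha> where \<alpha>: "\<alpha> \<in> keys d" and nonzero: "lookup (\<phi> (single \<alpha> (lookup d \<alpha>))) 0 \<noteq> 0"
    by (rule sum.not_neutral_contains_not_neutral)
  have \<alpha>_hibi: "hibi_exp P le \<alpha>" and \<alpha>_deg: "N \<le> lookup \<alpha> None" using keys_d \<alpha> by auto
  have "exp_at \<alpha> u \<le> exp_at \<alpha> v + (q - 1)" if "covers (P_bar P) (le_bar le) u v" for u v
  proof (rule ccontr)
    assume "\<not> exp_at \<alpha> u \<le> exp_at \<alpha> v + (q - 1)"
    then have "exp_at \<alpha> v + q \<le> exp_at \<alpha> u" by linarith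
    then have "lookup (\<phi> (single \<alpha> (lookup d \<alpha>))) 0 = 0"
      by (rule splitting_kills_steep_monomial[OF fin po \<phi>_R \<phi>_lin \<alpha>_hibi that])
    with nonzero show False by simp
  qed
  then have "lookup \<alpha> None \<le> (card C - 1) * (q - 1)"
    by (rule hibi_exp_degree_le_max_chain[OF fin po \<alpha>_hibi C])
  then show ?thesis using \<alpha>_deg by simp
qed

lemma F_pure_le_max_chain_len:
  assumes p: "prime p" and fin: "finite P" and po: "is_poset P le"
    and C: "is_max_chain (P_bar P) (le_bar le) C" and "t \<ge> 0"
    and "F_pure (hibi_ring P le :: ('a, 'k::comm_ring_1) mpoly set) (hibi_max P le) p t"
  shows "t \<le> real_of_int (chain_len C)"
proof -
  obtain e0 where e0: "\<forall>e\<ge>e0. \<exists>d \<in> ideal_pow (hibi_ring P le) (hibi_max P le :: ('a, 'k) mpoly set)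
      (nat \<lceil>t * (real (p ^ e) - 1)\<rceil>). frob_splits (hibi_ring P le) (p ^ e) d"
    using assms(6) unfolding F_pure_def by blast
  define q where "q = p ^ max e0 1"
  have "p ^ 1 \<le> q" unfolding q_def using prime_ge_1_nat[OF p] by (intro power_increasing) auto
  then have "q \<ge> 2" using prime_ge_2_nat[OF p] by simp
  define N where "N = nat \<lceil>t * (real q - 1)\<rceil>"
  obtain d where "d \<in> ideal_pow (hibi_ring P le) (hibi_max P le :: ('a, 'k) mpoly set) N"
    and "frob_splits (hibi_ring P le) q d"
    using e0[rule_format, of "max e0 1"] unfolding q_def N_def by auto
  then have "N \<le> (card C - 1) * (q - 1)" by (intro frob_splitting_degree_bound[OF fin po _ _ C])
  then have "real N \<le> real (card C - 1) * real (q - 1)" by (metis of_nat_le_iff of_nat_mult)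
  moreover have "card C \<ge> 1"
    using finite_max_chain_P_bar[OF fin C] max_chain_P_bar_ends(1)[OF C]
    by (auto simp: Suc_le_eq card_gt_0_iff)
  ultimately have "real N \<le> (real (card C) - 1) * (real q - 1)"
    using \<open>q \<ge> 2\<close> by (simp add: of_nat_diff)
  moreover have "t * (real q - 1) \<le> real N" unfolding N_def by (rule real_nat_ceiling_ge)
  ultimately have "t * (real q - 1) \<le> (real (card C) - 1) * (real q - 1)" by linarith
  then show ?thesis using \<open>q \<ge> 2\<close> unfolding chain_len_def by simp
qed

lemma fpt_hibi_max_le_max_chain_len:
  assumes "prime p" "finite P" "is_poset P le" "is_max_chain (P_bar P) (le_bar le) C"
  shows "fpt (hibi_ring P le :: ('a, 'k::comm_ring_1) mpoly set) (hibi_max P le) p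
    \<le> ereal (real_of_int (chain_len C))"
  unfolding fpt_def by (rule Sup_least) (auto dest: F_pure_le_max_chain_len[OF assms])

theorem corollary3p8:
  fixes P :: "'a set" and le :: "'a \<Rightarrow> 'a \<Rightarrow> bool" and p :: nat
  assumes "prime p" and "CHAR('k::field) = p"
    and "\<forall>y::'k. \<exists>x. x ^ p = y"
    and "finite P" and "is_poset P le"
  shows "fpt (hibi_ring P le :: ('a, 'k) mpoly set) (hibi_max P le) p
           \<le> ereal (real_of_int (Min (chain_len ` {C. is_max_chain (P_bar P) (le_bar le) C})))
     \<and> Min (chain_len ` {C. is_max_chain (P_bar P) (le_bar le) C})
         = Min (chain_len ` {C. is_max_chain P le C}) + 2"
proof
  let ?M = "chain_len ` {C. is_max_chain (P_bar P) (le_bar le) C}"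
  have "finite ?M" using finite_max_chains[OF finite_P_bar[OF assms(4)]] by simp
  moreover have "?M \<noteq> {}" using finite_max_chain_exists[OF finite_P_bar[OF assms(4)]] by blast
  ultimately have "Min ?M \<in> ?M" by (rule Min_in)
  then obtain C where "is_max_chain (P_bar P) (le_bar le) C" "Min ?M = chain_len C" by auto
  then show "fpt (hibi_ring P le :: ('a, 'k) mpoly set) (hibi_max P le) p \<le> ereal (real_of_int (Min ?M))"
    using fpt_hibi_max_le_max_chain_len[OF assms(1,4,5)] by simp
  show "Min ?M = Min (chain_len ` {C. is_max_chain P le C}) + 2"
    by (rule Min_chain_len_P_bar[OF assms(4)])
qed

end
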